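(* Let $X$ be a compact scattered space with countable scattered height. Suppose that to each $x\in X$ one can assign a clopen neighborhood $U_x$ of $x$ such that $U_x\cap X^{(h(x))}=\{x\}$ and $\{U_x:x\in X\}$ is point-countable. If $X$ has a $P$-base for some directed set $P$ with calibre $(\omega_1,\omega)$, then $X$ is countable, hence metrizable.
   Context: All spaces are Tychonoff. $X$ is scattered if every nonempty subspace has an isolated point; for $A\subseteq X$ let $A'$ be the set of non-isolated points of $A$, set $X^{(0)}=X$, $X^{(\alpha)}=\bigcap_{\beta<\alpha}(X^{(\beta)})'$ for $\alpha>0$; for $x\in X$, $h(x)$ is the ordinal with $x\in X^{(h(x))}\setminus X^{(h(x)+1)}$, and the scattered height is $h(X)=\sup\{h(x):x\in X\}$. A family is point-countable if each point lies in only countably many members. A $P$-base is an assignment to each $x\in X$ of a neighborhood base $\{U_p:p\in P\}$ at $x$ with $U_p\subseteq U_{p'}$ whenever $p\ge p'$. A directed set has calibre $(\omega_1,\omega)$ if every uncountable subset contains an infinite subset with an upper bound. *)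

theory Defs
  imports "HOL-Analysis.Analysis"
begin

definition nonisol :: "'a topology \<Rightarrow> 'a set \<Rightarrow> 'a set" where
  "nonisol X A = A \<inter> (X derived_set_of A)"

definition scattered_space :: "'a topology \<Rightarrow> bool" where
  "scattered_space X \<longleftrightarrow>
     (\<forall>A. A \<subseteq> topspace X \<and> A \<noteq> {} \<longrightarrow> (\<exists>x\<in>A. x \<notin> nonisol X A))"

text \<open>Cantor--Bendixson derivatives indexed by a well-ordered type:
  X^(alpha) = X \<inter> INTER over beta < alpha of (X^(beta))'  (so X^(0) = X).\<close>
definition cb_deriv :: "'a topology \<Rightarrow> 'o::wellorder \<Rightarrow> 'a set" where
  "cb_deriv X = wfrec {(b, a). b < a}
      (\<lambda>f a. topspace X \<inter> (\<Inter>b\<in>{b. b < a}. nonisol X (f b)))"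

text \<open>Scattered height of a point: the alpha with x in X^(alpha) minus X^(alpha+1) = (X^(alpha))'.\<close>
definition cb_height :: "'a topology \<Rightarrow> 'a \<Rightarrow> 'o::wellorder" where
  "cb_height X x = (LEAST a. x \<in> cb_deriv X a \<and> x \<notin> nonisol X (cb_deriv X a))"

definition point_countable :: "'a topology \<Rightarrow> 'a set set \<Rightarrow> bool" where
  "point_countable X \<U> \<longleftrightarrow> (\<forall>y\<in>topspace X. countable {V\<in>\<U>. y \<in> V})"

definition directed_set :: "'p set \<Rightarrow> ('p \<Rightarrow> 'p \<Rightarrow> bool) \<Rightarrow> bool" where
  "directed_set P le \<longleftrightarrow>
     (\<forall>p\<in>P. le p p) \<and>
     (\<forall>p\<in>P. \<forall>q\<in>P. \<forall>r\<in>P. le p q \<and> le q r \<longrightarrow> le p r) \<and>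
     (\<forall>p\<in>P. \<forall>q\<in>P. \<exists>r\<in>P. le p r \<and> le q r)"

definition calibre_omega1_omega :: "'p set \<Rightarrow> ('p \<Rightarrow> 'p \<Rightarrow> bool) \<Rightarrow> bool" where
  "calibre_omega1_omega P le \<longleftrightarrow>
     (\<forall>Q. Q \<subseteq> P \<and> uncountable Q \<longrightarrow>
        (\<exists>R. R \<subseteq> Q \<and> infinite R \<and> (\<exists>u\<in>P. \<forall>r\<in>R. le r u)))"

definition has_P_base :: "'a topology \<Rightarrow> 'p set \<Rightarrow> ('p \<Rightarrow> 'p \<Rightarrow> bool) \<Rightarrow> bool" where
  "has_P_base X P le \<longleftrightarrow>
     (\<exists>B :: 'a \<Rightarrow> 'p \<Rightarrow> 'a set. \<forall>x\<in>topspace X.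
        (\<forall>p\<in>P. B x p \<subseteq> topspace X \<and> x \<in> X interior_of (B x p)) \<and>
        (\<forall>W. openin X W \<and> x \<in> W \<longrightarrow> (\<exists>p\<in>P. B x p \<subseteq> W)) \<and>
        (\<forall>p\<in>P. \<forall>p'\<in>P. le p' p \<longrightarrow> B x p \<subseteq> B x p'))"

end

(* Call a point locally countable if it has a countable open neighbourhood.  If X were
   uncountable, compactness would give a point that is not locally countable, and
   scatteredness an isolated point y of the set of such points; so all points z other than y
   of some closed neighbourhood K of y have countable open neighbourhoods V z, which may be
   shrunk into U z.  Since z is determined by U z and its height, of which there are only
   countably many, the V z form a point-countable family, and a maximality argument yields an
   uncountable A in K - {y} meeting each V z in at most one point.  The calibre of P, applied
   to the P-base at y, gives an infinite R in A whose closure misses y.  That closure is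
   compact and covered by the V z, hence contains only finitely many points of A: a
   contradiction.  Finally, a countable compact Tychonoff space embeds into a countable power
   of the real line, so it is metrizable. *)

theory Submission
  imports Defs
begin

lemma uncountable_pairwise_subset:
  fixes E :: "'a \<Rightarrow> 'a \<Rightarrow> bool"
  assumes "uncountable S"
    and nbhd_countable: "\<And>a. a \<in> S \<Longrightarrow> countable {b \<in> S. E a b}"
    and sym: "\<And>a b. E a b \<Longrightarrow> E b a"
  shows "\<exists>A\<subseteq>S. uncountable A \<and> pairwise (\<lambda>a b. \<not> E a b) A"
proof -
  define Indep where "Indep = {A. A \<subseteq> S \<and> pairwise (\<lambda>a b. \<not> E a b) A}"
  have "\<forall>C\<in>chains Indep. \<Union>C \<in> Indep"
  proof
    fix C assume "C \<in> chains Indep"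
    then have "C \<subseteq> Indep" "chain\<^sub>\<subseteq> C"
      by (simp_all add: chains_def)
    then have "pairwise (\<lambda>a b. \<not> E a b) (\<Union>C)"
      by (intro pairwise_chain_Union) (auto simp: Indep_def)
    with \<open>C \<subseteq> Indep\<close> show "\<Union>C \<in> Indep"
      by (auto simp: Indep_def)
  qed
  then obtain M where M: "M \<in> Indep" and maximal: "\<And>A. A \<in> Indep \<Longrightarrow> M \<subseteq> A \<Longrightarrow> A = M"
    using Zorn_Lemma[of Indep] by metis
  have "uncountable M"
  proof
    assume "countable M"
    moreover have "M \<subseteq> S" using M by (simp add: Indep_def)
    ultimately have "countable (M \<union> (\<Union>a\<in>M. {b \<in> S. E a b}))"
      by (intro countable_Un countable_UN) (auto intro: nbhd_countable)
    then have "\<not> S \<subseteq> M \<union> (\<Union>a\<in>M. {b \<in> S. E a b})"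
      using \<open>uncountable S\<close> countable_subset by blast
    then obtain b where b: "b \<in> S" "b \<notin> M" "\<And>a. a \<in> M \<Longrightarrow> \<not> E a b"
      by blast
    then have "insert b M \<in> Indep"
      using M sym by (auto simp: Indep_def pairwise_insert)
    then show False
      using maximal b(2) by blast
  qed
  then show ?thesis
    using M by (auto simp: Indep_def)
qed

lemma uncountable_subset_meeting_each_at_most_once:
  assumes "uncountable S"
    and V_countable: "\<And>z. z \<in> S \<Longrightarrow> countable (V z)"
    and V_point_countable: "\<And>w. w \<in> S \<Longrightarrow> countable {z \<in> S. w \<in> V z}"
  shows "\<exists>A\<subseteq>S. uncountable A \<and> (\<forall>z\<in>S. \<forall>a\<in>A. \<forall>b\<in>A. a \<in> V z \<longrightarrow> b \<in> V z \<longrightarrow> a = b)"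
proof -
  define E where "E a b \<longleftrightarrow> (\<exists>z\<in>S. a \<in> V z \<and> b \<in> V z)" for a b
  have E_countable: "countable {b \<in> S. E a b}" if "a \<in> S" for a
  proof -
    have "{b \<in> S. E a b} \<subseteq> (\<Union>z\<in>{z \<in> S. a \<in> V z}. V z)"
      by (auto simp: E_def)
    moreover have "countable (\<Union>z\<in>{z \<in> S. a \<in> V z}. V z)"
      using that by (intro countable_UN V_point_countable) (auto intro: V_countable)
    ultimately show ?thesis
      by (rule countable_subset)
  qed
  have E_sym: "E b a" if "E a b" for a b
    using that by (auto simp: E_def)
  obtain A where A: "A \<subseteq> S" "uncountable A" and indep: "pairwise (\<lambda>a b. \<not> E a b) A"
    using uncountable_pairwise_subset[of S E, OF \<open>uncountable S\<close> E_countable E_sym] by blast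
  have "a = b" if "z \<in> S" "a \<in> A" "b \<in> A" "a \<in> V z" "b \<in> V z" for z a b
    using pairwiseD[OF indep, of a b] that unfolding E_def by blast
  with A show ?thesis
    by blast
qed

lemma calibre_omega1_omega_bounded_infinite_subset:
  assumes cal: "calibre_omega1_omega P le" and refl: "\<And>p. p \<in> P \<Longrightarrow> le p p"
    and "uncountable A" and f: "f ` A \<subseteq> P"
  shows "\<exists>R\<subseteq>A. infinite R \<and> (\<exists>u\<in>P. \<forall>a\<in>R. le (f a) u)"
proof (cases "\<exists>p\<in>f ` A. infinite (A \<inter> f -` {p})")
  case True
  then obtain p where "p \<in> f ` A" "infinite (A \<inter> f -` {p})"
    by blast
  moreover have "le (f a) p" if "a \<in> A \<inter> f -` {p}" for a
    using that f refl by auto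
  ultimately show ?thesis
    using f by (intro exI[of _ "A \<inter> f -` {p}"]) blast
next
  case False
  have "A = (\<Union>p\<in>f ` A. A \<inter> f -` {p})"
    by blast
  moreover have "countable (\<Union>p\<in>f ` A. A \<inter> f -` {p})" if "countable (f ` A)"
    by (rule countable_UN[OF that]) (use False in \<open>auto intro: countable_finite\<close>)
  ultimately have "uncountable (f ` A)"
    using \<open>uncountable A\<close> by auto
  then obtain R' u where R': "R' \<subseteq> f ` A" "infinite R'" "u \<in> P" "\<forall>r\<in>R'. le r u"
    using cal[unfolded calibre_omega1_omega_def, rule_format, of "f ` A"] f by blast
  define R where "R = A \<inter> f -` R'"
  have "f ` R = R'"
    using R'(1) by (auto simp: R_def)
  then have "infinite R"
    using R'(2) by blast
  with R' show ?thesis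
    by (intro exI[of _ R]) (auto simp: R_def)
qed

lemma has_P_baseE:
  assumes "has_P_base X P le" "x \<in> topspace X"
  obtains B where "\<And>p. p \<in> P \<Longrightarrow> x \<in> X interior_of (B p)"
    and "\<And>W. openin X W \<Longrightarrow> x \<in> W \<Longrightarrow> \<exists>p\<in>P. B p \<subseteq> W"
    and "\<And>p p'. p \<in> P \<Longrightarrow> p' \<in> P \<Longrightarrow> le p' p \<Longrightarrow> B p \<subseteq> B p'"
proof -
  obtain B where "\<forall>x\<in>topspace X.
        (\<forall>p\<in>P. B x p \<subseteq> topspace X \<and> x \<in> X interior_of (B x p)) \<and>
        (\<forall>W. openin X W \<and> x \<in> W \<longrightarrow> (\<exists>p\<in>P. B x p \<subseteq> W)) \<and>
        (\<forall>p\<in>P. \<forall>p'\<in>P. le p' p \<longrightarrow> B x p \<subseteq> B x p')"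
    using assms(1) unfolding has_P_base_def by (rule exE)
  with assms(2) show thesis
    by (intro that[of "B x"]) simp_all
qed

lemma has_P_base_infinite_subset_not_in_closure:
  assumes Pbase: "has_P_base X P le" and cal: "calibre_omega1_omega P le"
    and refl: "\<And>p. p \<in> P \<Longrightarrow> le p p" and "t1_space X"
    and y: "y \<in> topspace X" and A: "A \<subseteq> topspace X - {y}" "uncountable A"
  shows "\<exists>R\<subseteq>A. infinite R \<and> y \<notin> X closure_of R"
proof -
  obtain B where B_nbhd: "\<And>p. p \<in> P \<Longrightarrow> y \<in> X interior_of (B p)"
    and B_base: "\<And>W. openin X W \<Longrightarrow> y \<in> W \<Longrightarrow> \<exists>p\<in>P. B p \<subseteq> W"
    and B_anti: "\<And>p p'. p \<in> P \<Longrightarrow> p' \<in> P \<Longrightarrow> le p' p \<Longrightarrow> B p \<subseteq> B p'"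
    using has_P_baseE[OF Pbase y] by metis
  have "\<exists>p\<in>P. B p \<subseteq> topspace X - {a}" if "a \<in> A" for a
  proof -
    have "openin X (topspace X - {a})"
      using \<open>t1_space X\<close> A that by (auto intro: closedin_t1_singleton)
    moreover have "y \<in> topspace X - {a}"
      using y A that by blast
    ultimately show ?thesis
      by (rule B_base)
  qed
  then obtain f where f: "\<And>a. a \<in> A \<Longrightarrow> f a \<in> P \<and> B (f a) \<subseteq> topspace X - {a}"
    by metis
  then obtain R u where R: "R \<subseteq> A" "infinite R" "u \<in> P" "\<And>a. a \<in> R \<Longrightarrow> le (f a) u"
    using calibre_omega1_omega_bounded_infinite_subset[OF cal refl A(2), of f] by blast
  have "a \<notin> B u" if "a \<in> R" for a
  proof -
    have "a \<in> A"
      using R(1) that by blast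
    then have "B u \<subseteq> B (f a)"
      using B_anti R(3,4) f that by blast
    with f[OF \<open>a \<in> A\<close>] show ?thesis
      by blast
  qed
  then have "disjnt R (X interior_of B u)"
    using interior_of_subset[of X "B u"] by (auto simp: disjnt_def)
  then have "y \<notin> X closure_of R"
    using B_nbhd[OF \<open>u \<in> P\<close>] by (auto simp: in_closure_of disjnt_iff)
  with R show ?thesis
    by blast
qed

lemma compactin_finite_Int_if_cover_meets_at_most_once:
  assumes "compactin X C"
    and V: "\<And>z. z \<in> C \<Longrightarrow> openin X (V z) \<and> z \<in> V z"
    and once: "\<And>z a b. z \<in> C \<Longrightarrow> a \<in> A \<Longrightarrow> b \<in> A \<Longrightarrow> a \<in> V z \<Longrightarrow> b \<in> V z \<Longrightarrow> a = b"
  shows "finite (C \<inter> A)"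
proof -
  have "\<forall>W\<in>V ` C. openin X W" "C \<subseteq> \<Union>(V ` C)"
    using V by auto
  then obtain \<F> where "finite \<F>" "\<F> \<subseteq> V ` C" "C \<subseteq> \<Union>\<F>"
    using \<open>compactin X C\<close> unfolding compactin_def by meson
  then obtain F where F: "finite F" "F \<subseteq> C" "C \<subseteq> (\<Union>z\<in>F. V z)"
    using finite_subset_image[of \<F> V C] by blast
  have "finite (V z \<inter> A)" if "z \<in> F" for z
  proof (cases "V z \<inter> A = {}")
    case False
    then obtain a where "a \<in> V z \<inter> A"
      by blast
    then have "V z \<inter> A \<subseteq> {a}"
      using once F(2) that by blast
    then show ?thesis
      using finite_subset by blast
  qed simp
  then have "finite (\<Union>z\<in>F. V z \<inter> A)"
    using F(1) by blast
  moreover have "C \<inter> A \<subseteq> (\<Union>z\<in>F. V z \<inter> A)"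
    using F(3) by blast
  ultimately show ?thesis
    by (rule finite_subset[rotated])
qed

definition locally_countable_at :: "'a topology \<Rightarrow> 'a \<Rightarrow> bool" where
  "locally_countable_at X x \<longleftrightarrow> (\<exists>W. openin X W \<and> x \<in> W \<and> countable W)"

lemma compact_space_countable_if_locally_countable:
  assumes "compact_space X" and "\<And>x. x \<in> topspace X \<Longrightarrow> locally_countable_at X x"
  shows "countable (topspace X)"
proof -
  let ?\<W> = "{W. openin X W \<and> countable W}"
  have "topspace X \<subseteq> \<Union>?\<W>"
    using assms(2) by (auto simp: locally_countable_at_def)
  then obtain \<F> where "finite \<F>" "\<F> \<subseteq> ?\<W>" "topspace X \<subseteq> \<Union>\<F>"
    using \<open>compact_space X\<close> unfolding compact_space_alt by (metis (no_types, lifting) mem_Collect_eq)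
  then have "countable (\<Union>W\<in>\<F>. W)"
    by (metis countable_UN countable_finite mem_Collect_eq subsetD)
  with \<open>topspace X \<subseteq> \<Union>\<F>\<close> show ?thesis
    by (simp add: countable_subset)
qed

lemma scattered_space_isolated_point:
  assumes "scattered_space X" "A \<subseteq> topspace X" "A \<noteq> {}"
  obtains x W where "x \<in> A" "openin X W" "x \<in> W" "W \<inter> A = {x}"
proof -
  obtain x where "x \<in> A" "x \<notin> X derived_set_of A"
    using assms unfolding scattered_space_def nonisol_def by blast
  then obtain W where "openin X W" "x \<in> W" "\<And>y. y \<noteq> x \<Longrightarrow> y \<in> A \<Longrightarrow> y \<notin> W"
    using assms(2) unfolding derived_set_of_def by blast
  with \<open>x \<in> A\<close> show thesis
    by (intro that[of x W]) auto
qed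

lemma closedin_countable_if_punctured_point_countable_nbhds:
  assumes "compact_space X" "t1_space X"
    and Pbase: "has_P_base X P le" and cal: "calibre_omega1_omega P le"
    and refl: "\<And>p. p \<in> P \<Longrightarrow> le p p"
    and "closedin X K" "y \<in> K"
    and V: "\<And>z. z \<in> K - {y} \<Longrightarrow> openin X (V z) \<and> z \<in> V z"
    and V_countable: "\<And>z. z \<in> K - {y} \<Longrightarrow> countable (V z)"
    and V_point_countable: "\<And>w. w \<in> K - {y} \<Longrightarrow> countable {z \<in> K - {y}. w \<in> V z}"
  shows "countable K"
proof (rule ccontr)
  assume "uncountable K"
  then have "uncountable (K - {y})"
    by simp
  then obtain A where A: "A \<subseteq> K - {y}" "uncountable A"
    and once: "\<forall>z\<in>K - {y}. \<forall>a\<in>A. \<forall>b\<in>A. a \<in> V z \<longrightarrow> b \<in> V z \<longrightarrow> a = b"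
    using uncountable_subset_meeting_each_at_most_once[of "K - {y}" V, OF _ V_countable V_point_countable]
    by auto
  have K_sub: "K \<subseteq> topspace X"
    using \<open>closedin X K\<close> by (rule closedin_subset)
  then have "y \<in> topspace X" "A \<subseteq> topspace X - {y}"
    using \<open>y \<in> K\<close> A(1) by auto
  then obtain R where R: "R \<subseteq> A" "infinite R" "y \<notin> X closure_of R"
    using has_P_base_infinite_subset_not_in_closure[OF Pbase cal refl \<open>t1_space X\<close> _ _ A(2)] by blast
  define C where "C = X closure_of R"
  have "C \<subseteq> K"
    unfolding C_def using R(1) A(1) \<open>closedin X K\<close> by (intro closure_of_minimal) auto
  with R(3) have "C \<subseteq> K - {y}"
    by (auto simp: C_def)
  have "compactin X C"
    unfolding C_def using \<open>compact_space X\<close> by (simp add: closedin_compact_space)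
  then have "finite (C \<inter> A)"
  proof (rule compactin_finite_Int_if_cover_meets_at_most_once)
    show "openin X (V z) \<and> z \<in> V z" if "z \<in> C" for z
      using V \<open>C \<subseteq> K - {y}\<close> that by blast
    show "a = b" if "z \<in> C" "a \<in> A" "b \<in> A" "a \<in> V z" "b \<in> V z" for z a b
      using once \<open>C \<subseteq> K - {y}\<close> that by blast
  qed
  moreover have "R \<subseteq> C \<inter> A"
    unfolding C_def using R(1) A(1) K_sub by (auto intro!: closure_of_subset)
  ultimately show False
    using R(2) finite_subset by blast
qed

lemma locally_countable_at_if_punctured_nbhd:
  assumes "compact_space X" "regular_space X" "t1_space X"
    and Pbase: "has_P_base X P le" and cal: "calibre_omega1_omega P le"
    and refl: "\<And>p. p \<in> P \<Longrightarrow> le p p"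
    and U: "\<And>z. z \<in> topspace X \<Longrightarrow> openin X (U z) \<and> z \<in> U z"
    and U_point_countable: "\<And>w. w \<in> topspace X \<Longrightarrow> countable {z \<in> topspace X. w \<in> U z}"
    and "openin X G" "y \<in> G"
    and punctured: "\<And>z. z \<in> G - {y} \<Longrightarrow> locally_countable_at X z"
  shows "locally_countable_at X y"
proof -
  have "neighbourhood_base_of (closedin X) X"
    using \<open>regular_space X\<close> by (simp add: neighbourhood_base_of_closedin)
  then obtain N K where "openin X N" "closedin X K" "y \<in> N" "N \<subseteq> K" "K \<subseteq> G"
    using \<open>openin X G\<close> \<open>y \<in> G\<close> unfolding neighbourhood_base_of by meson
  have K_sub: "K - {y} \<subseteq> G - {y}" "K \<subseteq> topspace X"
    using \<open>K \<subseteq> G\<close> closedin_subset[OF \<open>closedin X K\<close>] by auto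
  have "locally_countable_at X z" if "z \<in> K - {y}" for z
    using punctured K_sub(1) that by blast
  then obtain W where W: "\<And>z. z \<in> K - {y} \<Longrightarrow> openin X (W z) \<and> z \<in> W z \<and> countable (W z)"
    unfolding locally_countable_at_def by metis
  text \<open>The sets \<open>W z\<close> make the neighbourhoods countable, the sets \<open>U z\<close> keep them
    point-countable.\<close>
  define V where "V z = U z \<inter> W z" for z
  have "countable K"
  proof (rule closedin_countable_if_punctured_point_countable_nbhds
      [OF \<open>compact_space X\<close> \<open>t1_space X\<close> Pbase cal refl \<open>closedin X K\<close>])
    show "y \<in> K"
      using \<open>y \<in> N\<close> \<open>N \<subseteq> K\<close> by blast
    show "openin X (V z) \<and> z \<in> V z" if "z \<in> K - {y}" for z
      using U W K_sub(2) that by (auto simp: V_def)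
    show "countable (V z)" if "z \<in> K - {y}" for z
      using W[OF that] countable_subset[of "V z" "W z"] by (auto simp: V_def)
    show "countable {z \<in> K - {y}. w \<in> V z}" if "w \<in> K - {y}" for w
    proof -
      have "countable {z \<in> topspace X. w \<in> U z}"
        using U_point_countable K_sub(2) that by blast
      then show ?thesis
        by (rule countable_subset[rotated]) (use K_sub(2) in \<open>auto simp: V_def\<close>)
    qed
  qed
  then show ?thesis
    using \<open>openin X N\<close> \<open>y \<in> N\<close> \<open>N \<subseteq> K\<close> countable_subset
    unfolding locally_countable_at_def by blast
qed

theorem countable_topspace_if_point_countable_nbhds:
  assumes "compact_space X" "regular_space X" "t1_space X" "scattered_space X"
    and Pbase: "has_P_base X P le" and cal: "calibre_omega1_omega P le"
    and refl: "\<And>p. p \<in> P \<Longrightarrow> le p p"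
    and U: "\<And>z. z \<in> topspace X \<Longrightarrow> openin X (U z) \<and> z \<in> U z"
    and U_point_countable: "\<And>w. w \<in> topspace X \<Longrightarrow> countable {z \<in> topspace X. w \<in> U z}"
  shows "countable (topspace X)"
proof (rule ccontr)
  assume "uncountable (topspace X)"
  define N where "N = {x \<in> topspace X. \<not> locally_countable_at X x}"
  have "N \<noteq> {}"
    using compact_space_countable_if_locally_countable[OF \<open>compact_space X\<close>]
      \<open>uncountable (topspace X)\<close> by (auto simp: N_def)
  then obtain y G where "y \<in> N" "openin X G" "y \<in> G" "G \<inter> N = {y}"
    using scattered_space_isolated_point[OF \<open>scattered_space X\<close>, of N] by (auto simp: N_def)
  moreover have "locally_countable_at X z" if "z \<in> G - {y}" for z
    using that \<open>G \<inter> N = {y}\<close> openin_subset[OF \<open>openin X G\<close>] by (auto simp: N_def)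
  ultimately have "locally_countable_at X y"
    using locally_countable_at_if_punctured_nbhd[OF assms(1-3) Pbase cal refl U U_point_countable]
    by blast
  with \<open>y \<in> N\<close> show False
    by (simp add: N_def)
qed

lemma countable_Collect_mem_if_inj_on_pair:
  assumes "inj_on (\<lambda>z. (U z, h z)) T"
    and "countable {V \<in> U ` T. w \<in> V}" and "countable (h ` T)"
  shows "countable {z \<in> T. w \<in> U z}"
proof -
  have "(\<lambda>z. (U z, h z)) ` {z \<in> T. w \<in> U z} \<subseteq> {V \<in> U ` T. w \<in> V} \<times> h ` T"
    by auto
  moreover have "countable ({V \<in> U ` T. w \<in> V} \<times> h ` T)"
    using assms(2,3) by simp
  ultimately have "countable ((\<lambda>z. (U z, h z)) ` {z \<in> T. w \<in> U z})"
    by (rule countable_subset)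
  moreover have "inj_on (\<lambda>z. (U z, h z)) {z \<in> T. w \<in> U z}"
    using assms(1) by (rule inj_on_subset) auto
  ultimately show ?thesis
    by (rule countable_image_inj_on)
qed

lemma countable_compact_imp_metrizable_space:
  assumes "completely_regular_space X" "Hausdorff_space X" "compact_space X"
    and "countable (topspace X)"
  shows "metrizable_space X"
proof -
  define I where "I = {p \<in> topspace X \<times> topspace X. fst p \<noteq> snd p}"
  have "\<exists>f. continuous_map X euclideanreal f \<and> f (fst p) \<noteq> f (snd p)" if "p \<in> I" for p
  proof -
    have "closedin X {snd p}" "fst p \<in> topspace X - {snd p}"
      using that \<open>Hausdorff_space X\<close> by (auto simp: I_def closedin_Hausdorff_singleton)
    with \<open>completely_regular_space X\<close> obtain f
      where "continuous_map X (top_of_set {0..1::real}) f" "f (fst p) = 0" "f ` {snd p} \<subseteq> {1}"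
      unfolding completely_regular_space_def by blast
    then show ?thesis
      by (metis continuous_map_in_subtopology image_insert insert_subset singletonD zero_neq_one)
  qed
  then obtain g where g: "\<And>p. p \<in> I \<Longrightarrow>
      continuous_map X euclideanreal (g p) \<and> g p (fst p) \<noteq> g p (snd p)"
    by metis
  define e where "e x = (\<lambda>p\<in>I. g p x)" for x
  have "continuous_map X (product_topology (\<lambda>_. euclideanreal) I) e"
    using g by (auto simp: e_def continuous_map_componentwise)
  moreover have "inj_on e (topspace X)"
  proof (rule inj_onI)
    fix x y assume xy: "x \<in> topspace X" "y \<in> topspace X" and "e x = e y"
    show "x = y"
    proof (rule ccontr)
      assume "x \<noteq> y"
      with xy have "(x, y) \<in> I"
        by (simp add: I_def)
      then have "e x (x, y) \<noteq> e y (x, y)"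
        using g[of "(x, y)"] by (simp add: e_def)
      with \<open>e x = e y\<close> show False
        by simp
    qed
  qed
  ultimately have "embedding_map X (product_topology (\<lambda>_. euclideanreal) I) e"
    using \<open>compact_space X\<close> by (intro continuous_imp_embedding_map) (simp_all add: Hausdorff_space_product_topology)
  then have "X homeomorphic_space subtopology (product_topology (\<lambda>_. euclideanreal) I) (e ` topspace X)"
    by (rule embedding_map_imp_homeomorphic_space)
  moreover have "countable I"
    using \<open>countable (topspace X)\<close> countable_subset[of I "topspace X \<times> topspace X"] by (simp add: I_def)
  then have "metrizable_space (product_topology (\<lambda>_. euclideanreal) I)"
    by (simp add: metrizable_space_product_topology metrizable_space_euclidean countable_subset[of _ I])
  ultimately show ?thesis
    using homeomorphic_metrizable_space metrizable_space_subtopology by blast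
qed

theorem mainTheorem14:
  fixes X :: "'a topology" and U :: "'a \<Rightarrow> 'a set"
    and P :: "'p set" and le :: "'p \<Rightarrow> 'p \<Rightarrow> bool"
  assumes tych: "completely_regular_space X" "Hausdorff_space X"
    and cpt: "compact_space X"
    and scat: "scattered_space X"
    and height_def: "\<forall>x\<in>topspace X. \<exists>a::'o::wellorder.
                        x \<in> cb_deriv X a \<and> x \<notin> nonisol X (cb_deriv X a)"
    and height_ctbl: "\<exists>a::'o. countable {b. b \<le> a} \<and>
                        (\<forall>x\<in>topspace X. (cb_height X x :: 'o) \<le> a)"
    and U_clopen: "\<forall>x\<in>topspace X. openin X (U x) \<and> closedin X (U x) \<and> x \<in> U x"
    and U_height: "\<forall>x\<in>topspace X. U x \<inter> cb_deriv X (cb_height X x :: 'o) = {x}"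
    and U_pc: "point_countable X (U ` topspace X)"
    and dir: "directed_set P le"
    and cal: "calibre_omega1_omega P le"
    and Pbase: "has_P_base X P le"
  shows "countable (topspace X) \<and> metrizable_space X"
proof -
  text \<open>Only the injectivity of \<open>z \<mapsto> (U z, cb_height X z)\<close> is used from \<open>U_height\<close>.\<close>
  obtain a :: 'o where a: "countable {b. b \<le> a}" "\<forall>x\<in>topspace X. cb_height X x \<le> a"
    using height_ctbl by blast
  have inj: "inj_on (\<lambda>z. (U z, cb_height X z :: 'o)) (topspace X)"
  proof (rule inj_onI)
    fix x x' assume "x \<in> topspace X" "x' \<in> topspace X"
      and "(U x, cb_height X x :: 'o) = (U x', cb_height X x')"
    then have "{x} = {x'}"
      using U_height by (metis prod.inject)
    then show "x = x'"
      by simp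
  qed
  have "countable {z \<in> topspace X. w \<in> U z}" if "w \<in> topspace X" for w
  proof (rule countable_Collect_mem_if_inj_on_pair[OF inj])
    show "countable {V \<in> U ` topspace X. w \<in> V}"
      using U_pc that by (simp add: point_countable_def)
    have "(\<lambda>z. cb_height X z :: 'o) ` topspace X \<subseteq> {b. b \<le> a}"
      using a(2) by blast
    then show "countable ((\<lambda>z. cb_height X z :: 'o) ` topspace X)"
      using a(1) by (rule countable_subset)
  qed
  moreover have "\<And>p. p \<in> P \<Longrightarrow> le p p"
    using dir by (simp add: directed_set_def)
  ultimately have "countable (topspace X)"
    using countable_topspace_if_point_countable_nbhds[OF cpt
        completely_regular_imp_regular_space[OF tych(1)] Hausdorff_imp_t1_space[OF tych(2)]
        scat Pbase cal] U_clopen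
    by blast
  then show ?thesis
    using countable_compact_imp_metrizable_space[OF tych cpt] by blast
qed

end
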